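(* Let $\mathbf c,\mathbf c_0\in\mathbb{R}^n$ and let $\mathbf P,\mathbf P_0\in\mathbb{R}^{n\times n}$ be symmetric positive definite. Let $\mathbf P_0=\mathbf L_0\mathbf L_0^\top$ be the Cholesky factorization, $\tilde{\mathbf c}=\mathbf L_0^\top(\mathbf c-\mathbf c_0)$, $\tilde{\mathbf P}=\mathbf L_0^{-1}\mathbf P\mathbf L_0^{-\top}$, and $\ell^*=\sup_{\beta\in\mathcal{I}_{\tilde{\mathbf P}}}\ell_{\tilde{\mathbf c},\tilde{\mathbf P}}(\beta)$. Then $$\mathcal{E}(\mathbf c,\mathbf P)\Subset\mathcal{E}\big(\mathbf c_0,(-\ell^* )^{-1}\mathbf P_0\big)$$ and $$\mathcal{E}(\mathbf d,-\ell^*\mathbf P)\Subset\mathcal{E}(\mathbf c_0,\mathbf P_0),\qquad\text{where } \mathbf d=(-\ell^* )^{-1/2}(\mathbf c-\mathbf c_0)+\mathbf c_0.$$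
   Context: $\mathcal{E}(\mathbf c,\mathbf P)=\{\mathbf x:(\mathbf x-\mathbf c)^\top\mathbf P(\mathbf x-\mathbf c)\le1\}$; $\mathcal{E}\Subset\mathcal{E}_0$ means $\mathcal{E}\subseteq\mathcal{E}_0$ and $\partial\mathcal{E}\cap\partial\mathcal{E}_0\neq\emptyset$. For symmetric positive definite $\mathbf Q$ and vector $\mathbf a$: let $\mathbf Q=\mathbf V\mathbf D\mathbf V^\top$ be a spectral decomposition ($\mathbf V$ orthogonal, $\mathbf D$ diagonal with entries $\lambda_i$), $\bar{\mathbf a}=\mathbf V^\top\mathbf a$, $S(\bar{\mathbf a})=\{i:\bar a_i\neq0\}$, $\lambda_{\min}(\mathbf Q)$ the smallest eigenvalue; $\mathcal{I}_{\mathbf Q}=(\lambda_{\min}(\mathbf Q)^{-1},\infty)$ if some $i\in S(\bar{\mathbf a})$ has $\lambda_i=\lambda_{\min}(\mathbf Q)$, and $[\lambda_{\min}(\mathbf Q)^{-1},\infty)$ otherwise; and $\ell_{\mathbf a,\mathbf Q}(\beta)=-\beta-\sum_{i\in S(\bar{\mathbf a})}\bar a_i^2\frac{\lambda_i\beta}{\lambda_i\beta-1}$ for $\beta\in\mathcal{I}_{\mathbf Q}$. *)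

theory Defs
  imports "HOL-Analysis.Analysis"
begin

definition ellipsoid :: "real^'n \<Rightarrow> real^'n^'n \<Rightarrow> (real^'n) set" where
  "ellipsoid c P = {x. (x - c) \<bullet> (P *v (x - c)) \<le> 1}"

definition inscribed :: "(real^'n) set \<Rightarrow> (real^'n) set \<Rightarrow> bool" where
  "inscribed E E0 \<longleftrightarrow> E \<subseteq> E0 \<and> frontier E \<inter> frontier E0 \<noteq> {}"

definition sym_posdef :: "real^'n^'n \<Rightarrow> bool" where
  "sym_posdef P \<longleftrightarrow> transpose P = P \<and> (\<forall>x. x \<noteq> 0 \<longrightarrow> x \<bullet> (P *v x) > 0)"

definition cholesky_factor :: "real^('n::{finite,linorder})^('n::{finite,linorder}) \<Rightarrow> real^('n::{finite,linorder})^('n::{finite,linorder}) \<Rightarrow> bool" where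
  "cholesky_factor L P \<longleftrightarrow> P = L ** transpose L \<and>
     (\<forall>i j. i < j \<longrightarrow> L $ i $ j = 0) \<and> (\<forall>i. L $ i $ i > 0)"

definition diag_mat :: "real^'n \<Rightarrow> real^'n^'n" where
  "diag_mat lam = (\<chi> i j. if i = j then lam $ i else 0)"

definition spectral_decomp :: "real^'n^'n \<Rightarrow> real^'n^'n \<Rightarrow> real^'n \<Rightarrow> bool" where
  "spectral_decomp Q V lam \<longleftrightarrow> orthogonal_matrix V \<and> Q = V ** diag_mat lam ** transpose V"

definition lambda_min :: "real^'n^'n \<Rightarrow> real" where
  "lambda_min Q = Min {l. \<exists>v. v \<noteq> 0 \<and> Q *v v = l *s v}"

definition supp_idx :: "real^'n^'n \<Rightarrow> real^'n \<Rightarrow> 'n set" where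
  "supp_idx V a = {i. (transpose V *v a) $ i \<noteq> 0}"

definition I_set :: "real^'n^'n \<Rightarrow> real^'n^'n \<Rightarrow> real^'n \<Rightarrow> real^'n \<Rightarrow> real set" where
  "I_set Q V lam a =
     (if \<exists>i\<in>supp_idx V a. lam $ i = lambda_min Q
      then {inverse (lambda_min Q)<..} else {inverse (lambda_min Q)..})"

definition ell :: "real^'n^'n \<Rightarrow> real^'n \<Rightarrow> real^'n \<Rightarrow> real \<Rightarrow> real" where
  "ell V lam a \<beta> = - \<beta> - (\<Sum>i\<in>supp_idx V a.
      ((transpose V *v a) $ i)\<^sup>2 * (lam $ i * \<beta> / (lam $ i * \<beta> - 1)))"

end

theory Submission
  imports Defs
begin

(* In the coordinates z = V^T L0^T (x - c0) the quadratic form of P0 becomes |z|^2 and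
   E(c, P) becomes the axis-aligned ellipsoid sum_i lam_i (z_i - a_i)^2 <= 1 with a = V^T ct,
   so both claims amount to computing the maximum m of |z|^2 on that ellipsoid.
   Lagrangian duality does this: for beta in I the bound |z|^2 <= -ell(beta) holds on the
   ellipsoid coordinatewise (weak duality), and it is attained at a root beta of the secular
   equation sum_i lam_i a_i^2 / (lam_i beta - 1)^2 = 1, found by the intermediate value theorem,
   or, in the "hard case" where a vanishes on the eigencoordinates of lambda_min and the secular
   function is at most 1 at 1 / lambda_min, at beta = 1 / lambda_min with the missing constraint
   mass placed on such an eigencoordinate (strong duality). Hence m = -ell*.
   The second inscription is the first one transported by the homothety with centre c0 and
   ratio m^(-1/2). *)

definition dual_domain :: "real^'n \<Rightarrow> real^'n \<Rightarrow> real set" where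
  "dual_domain lam a =
     (let lm = Min (range (vec_nth lam))
      in if \<exists>i. a$i \<noteq> 0 \<and> lam$i = lm then {inverse lm<..} else {inverse lm..})"

definition dual_objective :: "real^'n \<Rightarrow> real^'n \<Rightarrow> real \<Rightarrow> real" where
  "dual_objective lam a \<beta> = \<beta> + (\<Sum>i\<in>UNIV. (a$i)\<^sup>2 * (lam$i * \<beta> / (lam$i * \<beta> - 1)))"

definition secular :: "real^'n \<Rightarrow> real^'n \<Rightarrow> real \<Rightarrow> real" where
  "secular lam a \<beta> = (\<Sum>i\<in>UNIV. lam$i * (a$i / (lam$i * \<beta> - 1))\<^sup>2)"

lemma lagrangian_term_identity:
  fixes k a z :: real
  assumes "k \<noteq> 1"
  shows "a\<^sup>2 * (k / (k - 1)) - (z\<^sup>2 - k * (z - a)\<^sup>2) = ((k - 1) * z - k * a)\<^sup>2 / (k - 1)"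
  using assms by (simp add: field_simps power2_eq_square)

lemma lagrangian_term_le:
  fixes k a z :: real
  assumes "1 \<le> k" and "a \<noteq> 0 \<Longrightarrow> 1 < k"
  shows "z\<^sup>2 - k * (z - a)\<^sup>2 \<le> a\<^sup>2 * (k / (k - 1))"
proof (cases "k = 1")
  case True
  then show ?thesis using assms by fastforce
next
  case False
  then have "0 \<le> ((k - 1) * z - k * a)\<^sup>2 / (k - 1)" using assms(1) by simp
  then show ?thesis using lagrangian_term_identity[OF False, of a z] by linarith
qed

lemma lagrangian_term_eq:
  fixes k a :: real
  assumes "k \<noteq> 1"
  shows "(a * k / (k - 1))\<^sup>2 - k * (a * k / (k - 1) - a)\<^sup>2 = a\<^sup>2 * (k / (k - 1))"
  using lagrangian_term_identity[OF assms, of a "a * k / (k - 1)"] assms by simp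

lemma sum_squares_lagrangian:
  fixes lam a z :: "real^'n"
  shows "(\<Sum>i\<in>UNIV. (z$i)\<^sup>2) = \<beta> + (\<Sum>i\<in>UNIV. (z$i)\<^sup>2 - lam$i * \<beta> * (z$i - a$i)\<^sup>2)
           - \<beta> * (1 - (\<Sum>i\<in>UNIV. lam$i * (z$i - a$i)\<^sup>2))"
  by (simp add: algebra_simps sum_subtractf sum_distrib_left)

lemma dual_domain_ge:
  assumes "\<beta> \<in> dual_domain lam a"
  shows "inverse (Min (range (vec_nth lam))) \<le> \<beta>"
  using assms by (auto simp: dual_domain_def Let_def split: if_splits)

lemma dual_domain_upward:
  assumes "\<beta> \<in> dual_domain lam a" and "\<beta> \<le> \<beta>'"
  shows "\<beta>' \<in> dual_domain lam a"
  using assms by (auto simp: dual_domain_def Let_def split: if_splits)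

lemma dual_domain_pos:
  assumes "\<forall>i. 0 < lam$i" and "\<beta> \<in> dual_domain lam a"
  shows "0 < \<beta>"
proof -
  have "0 < Min (range (vec_nth lam))" using assms(1) by simp
  then show ?thesis
    using dual_domain_ge[OF assms(2)] by (meson inverse_positive_iff_positive less_le_trans)
qed

lemma dual_domain_gt_one:
  assumes lam: "\<forall>i. 0 < lam$i" and \<beta>: "\<beta> \<in> dual_domain lam a"
  shows "1 \<le> lam$i * \<beta>" and "a$i \<noteq> 0 \<Longrightarrow> 1 < lam$i * \<beta>"
proof -
  define lm where "lm = Min (range (vec_nth lam))"
  have lm_le: "lm \<le> lam$i" by (simp add: lm_def)
  have "0 < lm" using lam by (simp add: lm_def)
  have "1 \<le> lm * \<beta>"
    using dual_domain_ge[OF \<beta>] \<open>0 < lm\<close> by (simp add: lm_def field_simps)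
  also have "lm * \<beta> \<le> lam$i * \<beta>"
    using lm_le dual_domain_pos[OF lam \<beta>] by simp
  finally show "1 \<le> lam$i * \<beta>" .
  assume "a$i \<noteq> 0"
  show "1 < lam$i * \<beta>"
  proof (cases "lam$i = lm")
    case True
    then have "inverse lm < \<beta>" using \<beta> \<open>a$i \<noteq> 0\<close>
      by (auto simp: dual_domain_def Let_def lm_def split: if_splits)
    then show ?thesis using True \<open>0 < lm\<close> by (simp add: field_simps)
  next
    case False
    then have "lm * \<beta> < lam$i * \<beta>" using lm_le dual_domain_pos[OF lam \<beta>] by simp
    then show ?thesis using \<open>1 \<le> lm * \<beta>\<close> by linarith
  qed
qed

lemma dual_objective_pos:
  assumes lam: "\<forall>i. 0 < lam$i" and \<beta>: "\<beta> \<in> dual_domain lam a"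
  shows "0 < dual_objective lam a \<beta>"
proof -
  have "0 \<le> (a$i)\<^sup>2 * (lam$i * \<beta> / (lam$i * \<beta> - 1))" for i
    using dual_domain_gt_one[OF lam \<beta>, of i] by simp
  then show ?thesis
    unfolding dual_objective_def using dual_domain_pos[OF assms]
    by (simp add: add_pos_nonneg sum_nonneg)
qed

lemma weak_duality:
  assumes lam: "\<forall>i. 0 < lam$i" and \<beta>: "\<beta> \<in> dual_domain lam a"
    and z: "(\<Sum>i\<in>UNIV. lam$i * (z$i - a$i)\<^sup>2) \<le> 1"
  shows "(\<Sum>i\<in>UNIV. (z$i)\<^sup>2) \<le> dual_objective lam a \<beta>"
proof -
  have "(\<Sum>i\<in>UNIV. (z$i)\<^sup>2 - lam$i * \<beta> * (z$i - a$i)\<^sup>2)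
          \<le> (\<Sum>i\<in>UNIV. (a$i)\<^sup>2 * (lam$i * \<beta> / (lam$i * \<beta> - 1)))"
    by (intro sum_mono lagrangian_term_le dual_domain_gt_one[OF lam \<beta>])
  moreover have "0 \<le> \<beta> * (1 - (\<Sum>i\<in>UNIV. lam$i * (z$i - a$i)\<^sup>2))"
    using dual_domain_pos[OF lam \<beta>] z by simp
  ultimately show ?thesis
    unfolding dual_objective_def sum_squares_lagrangian[of z \<beta> lam a] by linarith
qed

lemma continuous_on_secular:
  assumes lam: "\<forall>i. 0 < lam$i"
  shows "continuous_on (dual_domain lam a) (secular lam a)"
  unfolding secular_def
proof (intro continuous_on_sum)
  fix i
  show "continuous_on (dual_domain lam a) (\<lambda>\<beta>. lam$i * (a$i / (lam$i * \<beta> - 1))\<^sup>2)"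
  proof (cases "a$i = 0")
    case False
    then have "\<forall>\<beta>\<in>dual_domain lam a. lam$i * \<beta> - 1 \<noteq> 0"
      using dual_domain_gt_one(2)[OF lam] by fastforce
    then show ?thesis by (intro continuous_intros) auto
  qed simp
qed

lemma secular_tendsto_zero:
  assumes lam: "\<forall>i. 0 < lam$i"
  shows "(secular lam a \<longlongrightarrow> 0) at_top"
proof -
  have "((\<lambda>\<beta>. lam$i * (a$i / (lam$i * \<beta> - 1))\<^sup>2) \<longlongrightarrow> 0) at_top" for i
  proof -
    have "filterlim (\<lambda>\<beta>. - 1 + lam$i * \<beta>) at_top at_top"
      using lam by (intro filterlim_tendsto_add_at_top[OF tendsto_const]
          filterlim_tendsto_pos_mult_at_top[OF tendsto_const _ filterlim_ident]) auto
    then have "filterlim (\<lambda>\<beta>. lam$i * \<beta> - 1) at_infinity at_top"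
      by (simp add: filterlim_at_top_imp_at_infinity)
    then have "((\<lambda>\<beta>. a$i / (lam$i * \<beta> - 1)) \<longlongrightarrow> 0) at_top"
      by (rule tendsto_divide_0[OF tendsto_const])
    from tendsto_mult_left[OF tendsto_power[OF this, of 2], of "lam$i"] show ?thesis by simp
  qed
  then show ?thesis
    unfolding secular_def by (auto intro!: tendsto_null_sum)
qed

lemma exists_secular_ge_one:
  fixes lam a :: "real^'n"
  defines "lm \<equiv> Min (range (vec_nth lam))"
  assumes lam: "\<forall>i. 0 < lam$i"
    and "(\<exists>i. a$i \<noteq> 0 \<and> lam$i = lm) \<or> 1 < secular lam a (inverse lm)"
  shows "\<exists>\<beta>\<in>dual_domain lam a. 1 \<le> secular lam a \<beta>"
proof (cases "\<exists>i. a$i \<noteq> 0 \<and> lam$i = lm")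
  case True
  then obtain i where i: "a$i \<noteq> 0" "lam$i = lm" by blast
  have "0 < lm" using lam by (simp add: lm_def)
  \<comment> \<open>the \<open>i\<close>-th summand of the secular function equals \<open>1\<close> at \<open>\<beta>\<close>\<close>
  define \<beta> where "\<beta> = (1 + \<bar>a$i\<bar> * sqrt lm) / lm"
  have "inverse lm < \<beta>" using i \<open>0 < lm\<close> by (simp add: \<beta>_def field_simps)
  then have \<beta>_mem: "\<beta> \<in> dual_domain lam a" using True by (auto simp: dual_domain_def Let_def lm_def)
  have "1 = lam$i * (a$i / (lam$i * \<beta> - 1))\<^sup>2"
    using i \<open>0 < lm\<close> by (simp add: \<beta>_def power_divide power_mult_distrib)
  also have "\<dots> \<le> secular lam a \<beta>"
    unfolding secular_def using lam by (intro member_le_sum) (auto simp: less_imp_le)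
  finally show ?thesis using \<beta>_mem by blast
next
  case False
  then have "inverse lm \<in> dual_domain lam a" by (simp add: dual_domain_def Let_def lm_def)
  then show ?thesis using False assms(3) by force
qed

lemma secular_root_or_hard_case:
  fixes lam a :: "real^'n"
  assumes lam: "\<forall>i. 0 < lam$i"
  obtains \<beta> j where "\<beta> \<in> dual_domain lam a" and "secular lam a \<beta> \<le> 1"
    and "secular lam a \<beta> = 1 \<or> (a$j = 0 \<and> lam$j * \<beta> = 1)"
proof -
  define lm where "lm = Min (range (vec_nth lam))"
  have "lm \<in> range (vec_nth lam)" unfolding lm_def by (intro Min_in) auto
  then obtain j where j: "lam$j = lm" by auto
  show ?thesis
  proof (cases "(\<exists>i. a$i \<noteq> 0 \<and> lam$i = lm) \<or> 1 < secular lam a (inverse lm)")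
    case True
    then obtain \<beta>1 where \<beta>1: "\<beta>1 \<in> dual_domain lam a" "1 \<le> secular lam a \<beta>1"
      using exists_secular_ge_one[OF lam] unfolding lm_def by blast
    obtain \<beta>2 where "\<forall>\<beta>\<ge>\<beta>2. secular lam a \<beta> < 1"
      using order_tendstoD(2)[OF secular_tendsto_zero[OF lam], of 1]
      by (auto simp: eventually_at_top_linorder)
    then have "secular lam a (max \<beta>1 \<beta>2) < 1" by simp
    then have \<beta>2: "\<beta>1 \<le> max \<beta>1 \<beta>2" "secular lam a (max \<beta>1 \<beta>2) \<le> 1" by auto
    have "{\<beta>1..max \<beta>1 \<beta>2} \<subseteq> dual_domain lam a"
      using dual_domain_upward[OF \<beta>1(1)] by auto
    then have "continuous_on {\<beta>1..max \<beta>1 \<beta>2} (secular lam a)"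
      by (rule continuous_on_subset[OF continuous_on_secular[OF lam]])
    then obtain \<beta> where "\<beta>1 \<le> \<beta>" "secular lam a \<beta> = 1"
      using IVT2'[OF \<beta>2(2) \<beta>1(2) \<beta>2(1)] by blast
    then show ?thesis using that dual_domain_upward[OF \<beta>1(1)] by fastforce
  next
    case False
    then have "inverse lm \<in> dual_domain lam a" by (simp add: dual_domain_def Let_def lm_def)
    moreover have "a$j = 0" and "lam$j * inverse lm = 1"
      using False j lam[rule_format, of j] by auto
    ultimately show ?thesis using that False by fastforce
  qed
qed

lemma strong_duality:
  fixes lam a :: "real^'n"
  assumes lam: "\<forall>i. 0 < lam$i"
  obtains \<beta> z where "\<beta> \<in> dual_domain lam a" and "(\<Sum>i\<in>UNIV. lam$i * (z$i - a$i)\<^sup>2) = 1"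
    and "(\<Sum>i\<in>UNIV. (z$i)\<^sup>2) = dual_objective lam a \<beta>"
proof -
  obtain \<beta> j where \<beta>: "\<beta> \<in> dual_domain lam a" and le1: "secular lam a \<beta> \<le> 1"
    and root: "secular lam a \<beta> = 1 \<or> (a$j = 0 \<and> lam$j * \<beta> = 1)"
    using secular_root_or_hard_case[OF lam] by blast
  define k where "k i = lam$i * \<beta>" for i
  have k_ne: "k i \<noteq> 1" if "a$i \<noteq> 0" for i
    using dual_domain_gt_one(2)[OF lam \<beta> that] by (simp add: k_def)
  \<comment> \<open>in the hard case the missing mass of the constraint is put on the \<open>j\<close>-th coordinate\<close>
  define t where "t = sqrt ((1 - secular lam a \<beta>) / lam$j)"
  define z where "z = (\<chi> i. a$i * k i / (k i - 1)) + t *\<^sub>R axis j 1"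
  have t: "lam$j * t\<^sup>2 = 1 - secular lam a \<beta>"
    using le1 lam[rule_format, of j] by (simp add: t_def)
  have hard: "t = 0 \<or> a$j = 0 \<and> k j = 1"
    using root by (auto simp: t_def k_def)
  have shift: "z$i - a$i = a$i / (k i - 1) + (if i = j then t else 0)" for i
  proof (cases "a$i = 0")
    case False
    then have "k i - 1 \<noteq> 0" using k_ne by simp
    then show ?thesis by (simp add: z_def axis_def field_simps)
  qed (simp add: z_def axis_def)
  have "(\<Sum>i\<in>UNIV. lam$i * (z$i - a$i)\<^sup>2)
      = (\<Sum>i\<in>UNIV. lam$i * (a$i / (k i - 1))\<^sup>2 + (if i = j then lam$j * t\<^sup>2 else 0))"
    using hard by (intro sum.cong) (auto simp: shift power2_eq_square algebra_simps)
  also have "\<dots> = 1" using t by (simp add: sum.distrib secular_def k_def)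
  finally have constraint: "(\<Sum>i\<in>UNIV. lam$i * (z$i - a$i)\<^sup>2) = 1" .
  have "(z$i)\<^sup>2 - k i * (z$i - a$i)\<^sup>2 = (a$i)\<^sup>2 * (k i / (k i - 1))" for i
  proof (cases "i = j \<and> t \<noteq> 0")
    case True
    then show ?thesis using hard by (simp add: z_def)
  next
    case False
    then have "z$i = a$i * k i / (k i - 1)" by (auto simp: z_def axis_def)
    then show ?thesis using lagrangian_term_eq[of "k i" "a$i"] k_ne[of i] by (cases "a$i = 0") auto
  qed
  then have "(\<Sum>i\<in>UNIV. (z$i)\<^sup>2) = dual_objective lam a \<beta>"
    using sum_squares_lagrangian[of z \<beta> lam a] constraint
    by (simp add: dual_objective_def k_def mult.assoc)
  with \<beta> constraint show ?thesis using that by blast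
qed

lemma invertible_matrix_inv:
  fixes A :: "real^'n^'n"
  assumes "invertible A"
  shows "A ** matrix_inv A = mat 1" and "matrix_inv A ** A = mat 1"
  using someI_ex[OF assms[unfolded invertible_def]] by (auto simp: matrix_inv_def)

lemma sym_posdef_invertible:
  assumes "sym_posdef P"
  shows "invertible P"
proof -
  have "inj ((*v) P)"
  proof (rule injI)
    fix x y assume "P *v x = P *v y"
    then have "(x - y) \<bullet> (P *v (x - y)) = 0" by (simp add: matrix_vector_mult_diff_distrib)
    then show "x = y" using assms unfolding sym_posdef_def by (metis less_irrefl right_minus_eq)
  qed
  then show ?thesis using matrix_left_invertible_injective invertible_left_inverse by blast
qed

lemma invertible_mult_left_factor:
  fixes A B :: "real^'n^'n"
  assumes "invertible (A ** B)"
  shows "invertible A"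
proof -
  obtain C where "A ** B ** C = mat 1" using assms invertible_def by blast
  then show ?thesis unfolding invertible_right_inverse by (metis matrix_mul_assoc)
qed

lemma quadratic_form_congruence:
  fixes A P :: "real^'n^'n"
  shows "(A *v w) \<bullet> (P *v (A *v w)) = w \<bullet> ((transpose A ** P ** A) *v w)"
  by (metis dot_lmul_matrix inner_commute matrix_vector_mul_assoc transpose_matrix_vector)

lemma diag_mat_mult: "diag_mat lam *v w = (\<chi> i. lam$i * w$i)"
  by (simp add: diag_mat_def matrix_vector_mult_def vec_eq_iff mult_delta_left)

lemma quadratic_form_diag_mat: "w \<bullet> (diag_mat lam *v w) = (\<Sum>i\<in>UNIV. lam$i * (w$i)\<^sup>2)"
  by (simp add: diag_mat_mult inner_vec_def power2_eq_square algebra_simps)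

lemma eigenvalues_diag_mat:
  "{l. \<exists>v. v \<noteq> 0 \<and> diag_mat lam *v v = l *s v} = range (vec_nth lam)"
proof (intro set_eqI iffI)
  fix l assume "l \<in> {l. \<exists>v. v \<noteq> 0 \<and> diag_mat lam *v v = l *s v}"
  then obtain v where "v \<noteq> 0" and "\<forall>i. lam$i * v$i = l * v$i"
    by (auto simp: diag_mat_mult vec_eq_iff)
  then obtain i where "v$i \<noteq> 0" and "lam$i * v$i = l * v$i" by (auto simp: vec_eq_iff)
  then show "l \<in> range (vec_nth lam)" by auto
next
  fix l assume "l \<in> range (vec_nth lam)"
  then obtain i where "l = lam$i" by blast
  then have "diag_mat lam *v axis i 1 = l *s axis i 1"
    by (simp add: diag_mat_mult vec_eq_iff axis_def)
  moreover have "axis i (1::real) \<noteq> 0" by (simp add: axis_eq_0_iff)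
  ultimately show "l \<in> {l. \<exists>v. v \<noteq> 0 \<and> diag_mat lam *v v = l *s v}" by blast
qed

lemma eigenvalues_orthogonal_conj:
  fixes V Q :: "real^'n^'n"
  assumes "orthogonal_matrix V"
  shows "{l. \<exists>v. v \<noteq> 0 \<and> (V ** Q ** transpose V) *v v = l *s v}
       = {l. \<exists>w. w \<noteq> 0 \<and> Q *v w = l *s w}"
proof -
  have VtV: "transpose V ** V = mat 1" and VVt: "V ** transpose V = mat 1"
    using assms by (auto simp: orthogonal_matrix_def)
  have "(V ** Q ** transpose V) *v v = l *s v \<longleftrightarrow> Q *v (transpose V *v v) = l *s (transpose V *v v)"
    for v l
  proof
    assume "(V ** Q ** transpose V) *v v = l *s v"
    then have "transpose V *v ((V ** Q ** transpose V) *v v) = transpose V *v (l *s v)" by simp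
    then show "Q *v (transpose V *v v) = l *s (transpose V *v v)"
      by (simp add: matrix_vector_mul_assoc matrix_mul_assoc VtV
          scalar_mult_eq_scaleR matrix_vector_mult_scaleR del: transpose_matrix_vector)
  next
    assume "Q *v (transpose V *v v) = l *s (transpose V *v v)"
    then have "V *v (Q *v (transpose V *v v)) = V *v (l *s (transpose V *v v))" by simp
    then show "(V ** Q ** transpose V) *v v = l *s v"
      by (simp add: matrix_vector_mul_assoc matrix_mul_assoc VVt
          scalar_mult_eq_scaleR matrix_vector_mult_scaleR del: transpose_matrix_vector)
  qed
  moreover have "v \<noteq> 0 \<longleftrightarrow> transpose V *v v \<noteq> 0" for v
    by (metis VVt matrix_vector_mul_assoc matrix_vector_mul_lid matrix_vector_mult_0_right)
  ultimately have eig: "(\<exists>v. v \<noteq> 0 \<and> (V ** Q ** transpose V) *v v = l *s v)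
      \<longleftrightarrow> (\<exists>w. w \<noteq> 0 \<and> Q *v w = l *s w)" for l
    by (metis VtV matrix_vector_mul_assoc matrix_vector_mul_lid)
  show ?thesis using eig by blast
qed

lemma lambda_min_spectral_decomp:
  assumes "spectral_decomp Q V lam"
  shows "lambda_min Q = Min (range (vec_nth lam))"
proof -
  from assms have V: "orthogonal_matrix V" and Q: "Q = V ** diag_mat lam ** transpose V"
    by (auto simp: spectral_decomp_def)
  show ?thesis
    unfolding lambda_min_def Q eigenvalues_orthogonal_conj[OF V] eigenvalues_diag_mat ..
qed

lemma I_set_spectral_decomp:
  assumes "spectral_decomp Q V lam"
  shows "I_set Q V lam a = dual_domain lam (transpose V *v a)"
  unfolding I_set_def dual_domain_def supp_idx_def lambda_min_spectral_decomp[OF assms]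
  by (simp add: Let_def del: transpose_matrix_vector)

lemma ell_eq_neg_dual_objective: "ell V lam a \<beta> = - dual_objective lam (transpose V *v a) \<beta>"
proof -
  let ?f = "\<lambda>i. ((transpose V *v a)$i)\<^sup>2 * (lam$i * \<beta> / (lam$i * \<beta> - 1))"
  have "sum ?f (supp_idx V a) = sum ?f UNIV"
    by (intro sum.mono_neutral_left) (auto simp: supp_idx_def simp del: transpose_matrix_vector)
  then show ?thesis by (simp add: ell_def dual_objective_def del: transpose_matrix_vector)
qed

lemma diag_mat_one: "diag_mat 1 = mat 1"
  by (simp add: diag_mat_def mat_def vec_eq_iff)

lemma simultaneous_diagonalization:
  fixes P L V :: "real^'n^'n"
  assumes L: "invertible L"
    and spec: "spectral_decomp (matrix_inv L ** P ** transpose (matrix_inv L)) V lam"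
  defines "A \<equiv> transpose (matrix_inv L) ** V"
  shows "transpose A ** (L ** transpose L) ** A = diag_mat 1"
    and "transpose A ** P ** A = diag_mat lam"
    and "A ** (transpose V ** transpose L) = mat 1"
    and "(transpose V ** transpose L) ** A = mat 1"
proof -
  define M where "M = matrix_inv L"
  have V: "orthogonal_matrix V" and Pt: "M ** P ** transpose M = V ** diag_mat lam ** transpose V"
    using spec by (auto simp: spectral_decomp_def M_def)
  have inv: "L ** M = mat 1" "M ** L = mat 1"
    using invertible_matrix_inv[OF L] by (auto simp: M_def)
  have inv_t: "transpose M ** transpose L = mat 1" "transpose L ** transpose M = mat 1"
    using inv by (metis matrix_transpose_mul transpose_mat)+
  have orth: "transpose V ** V = mat 1" "V ** transpose V = mat 1"
    using V by (auto simp: orthogonal_matrix_def)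
  have cancel: "X ** (Y ** Z) = Z" if "X ** Y = mat 1" for X Y Z :: "real^'n^'n"
    using that by (metis matrix_mul_assoc matrix_mul_lid)
  have tA: "transpose A = transpose V ** M" by (simp add: A_def M_def matrix_transpose_mul)
  show "transpose A ** (L ** transpose L) ** A = diag_mat 1"
    unfolding tA
    by (simp add: A_def M_def[symmetric] matrix_mul_assoc[symmetric] cancel inv inv_t orth diag_mat_one)
  have "transpose A ** P ** A = transpose V ** (M ** P ** transpose M) ** V"
    unfolding tA by (simp add: A_def M_def[symmetric] matrix_mul_assoc)
  also have "\<dots> = diag_mat lam"
    unfolding Pt by (simp add: matrix_mul_assoc[symmetric] cancel orth)
  finally show "transpose A ** P ** A = diag_mat lam" .
  show "A ** (transpose V ** transpose L) = mat 1"
    by (simp add: A_def M_def[symmetric] matrix_mul_assoc[symmetric] cancel inv_t orth)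
  show "(transpose V ** transpose L) ** A = mat 1"
    by (simp add: A_def M_def[symmetric] matrix_mul_assoc[symmetric] cancel inv_t orth)
qed

lemma quadratic_form_coordinates:
  fixes A B P :: "real^'n^'n"
  assumes "transpose A ** P ** A = diag_mat lam" and "A ** B = mat 1"
  shows "v \<bullet> (P *v v) = (\<Sum>i\<in>UNIV. lam$i * ((B *v v)$i)\<^sup>2)"
proof -
  have "v = A *v (B *v v)" using assms(2) by (simp add: matrix_vector_mul_assoc)
  then have "v \<bullet> (P *v v) = (B *v v) \<bullet> (diag_mat lam *v (B *v v))"
    by (metis quadratic_form_congruence assms(1))
  then show ?thesis by (simp only: quadratic_form_diag_mat)
qed

lemma diag_congruence_pos:
  fixes A P :: "real^'n^'n"
  assumes P: "sym_posdef P" and diag: "transpose A ** P ** A = diag_mat lam"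
    and A: "B ** A = mat 1"
  shows "0 < lam$i"
proof -
  have "A *v axis i 1 \<noteq> 0"
    by (metis A axis_eq_0_iff matrix_vector_mul_assoc matrix_vector_mul_lid
        matrix_vector_mult_0_right zero_neq_one)
  then have "0 < (A *v axis i 1) \<bullet> (P *v (A *v axis i 1))" using P by (simp add: sym_posdef_def)
  also have "\<dots> = lam$i"
    unfolding quadratic_form_congruence diag quadratic_form_diag_mat
    by (simp add: axis_def if_distrib[of "\<lambda>x. x\<^sup>2"] mult_delta_right cong: if_cong)
  finally show ?thesis .
qed

lemma quadratic_form_scaleR:
  fixes P :: "real^'n^'n"
  shows "(t *\<^sub>R v) \<bullet> (P *v (t *\<^sub>R v)) = t\<^sup>2 * (v \<bullet> (P *v v))"
  by (simp add: matrix_vector_mult_scaleR power2_eq_square)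

lemma mem_frontier_ellipsoid:
  fixes x c :: "real^'n"
  assumes q: "(x - c) \<bullet> (P *v (x - c)) = 1"
  shows "x \<in> frontier (ellipsoid c P)"
proof -
  have "x \<notin> interior (ellipsoid c P)"
  proof
    assume "x \<in> interior (ellipsoid c P)"
    then obtain e where "0 < e" and ball: "ball x e \<subseteq> ellipsoid c P"
      using mem_interior by blast
    have "x - c \<noteq> 0" using q by auto
    \<comment> \<open>moving slightly away from the centre leaves the ellipsoid\<close>
    define d where "d = e / (2 * norm (x - c))"
    have "0 < d" using \<open>0 < e\<close> \<open>x - c \<noteq> 0\<close> by (simp add: d_def)
    define y where "y = x + d *\<^sub>R (x - c)"
    have "dist x y = e / 2"
      using \<open>0 < e\<close> \<open>x - c \<noteq> 0\<close> by (simp add: y_def dist_norm d_def)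
    then have "y \<in> ellipsoid c P" using ball \<open>0 < e\<close> by auto
    moreover have "y - c = (1 + d) *\<^sub>R (x - c)" by (simp add: y_def algebra_simps)
    then have "(y - c) \<bullet> (P *v (y - c)) = (1 + d)\<^sup>2" by (simp only: quadratic_form_scaleR q)
    moreover have "1 < (1 + d)\<^sup>2" using \<open>0 < d\<close> by (intro one_less_power) auto
    ultimately show False by (simp add: ellipsoid_def)
  qed
  moreover have "x \<in> closure (ellipsoid c P)"
    using q closure_subset by (fastforce simp: ellipsoid_def)
  ultimately show ?thesis by (simp add: frontier_def)
qed

lemma inscribed_ellipsoidI:
  fixes c c0 x :: "real^'n"
  assumes "\<forall>y. (y - c) \<bullet> (P *v (y - c)) \<le> 1 \<longrightarrow> (y - c0) \<bullet> (P0 *v (y - c0)) \<le> 1"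
    and "(x - c) \<bullet> (P *v (x - c)) = 1" and "(x - c0) \<bullet> (P0 *v (x - c0)) = 1"
  shows "inscribed (ellipsoid c P) (ellipsoid c0 P0)"
  using assms mem_frontier_ellipsoid[of x c P] mem_frontier_ellipsoid[of x c0 P0]
  unfolding inscribed_def ellipsoid_def by blast

lemma inscribed_ellipsoids_of_max:
  fixes c c0 :: "real^'n"
  assumes "0 < m"
    and bound: "\<forall>y. (y - c) \<bullet> (P *v (y - c)) \<le> 1 \<longrightarrow> (y - c0) \<bullet> (P0 *v (y - c0)) \<le> m"
    and touch: "\<exists>x. (x - c) \<bullet> (P *v (x - c)) = 1 \<and> (x - c0) \<bullet> (P0 *v (x - c0)) = m"
  shows "inscribed (ellipsoid c P) (ellipsoid c0 (inverse m *\<^sub>R P0))"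
    and "inscribed (ellipsoid (m powr (-1/2) *\<^sub>R (c - c0) + c0) (m *\<^sub>R P)) (ellipsoid c0 P0)"
proof -
  from touch obtain x where x: "(x - c) \<bullet> (P *v (x - c)) = 1" "(x - c0) \<bullet> (P0 *v (x - c0)) = m"
    by blast
  show "inscribed (ellipsoid c P) (ellipsoid c0 (inverse m *\<^sub>R P0))"
    using bound x \<open>0 < m\<close>
    by (intro inscribed_ellipsoidI[of c P])
      (auto simp: scaleR_matrix_vector_assoc[symmetric] field_simps)
  define s where "s = m powr (-1/2)"
  have "0 < s" using \<open>0 < m\<close> by (simp add: s_def)
  have "s\<^sup>2 = m powr (-1/2 + -1/2)" by (simp only: s_def power2_eq_square powr_add)
  then have s2: "s\<^sup>2 * m = 1" using \<open>0 < m\<close> by (simp add: powr_minus)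
  \<comment> \<open>the homothety with centre \<open>c0\<close> and ratio \<open>s\<close> maps the first pair of ellipsoids
     onto the second\<close>
  define h where "h y = c0 + s *\<^sub>R (y - c0)" for y
  have h_d: "h y - (s *\<^sub>R (c - c0) + c0) = s *\<^sub>R (y - c)"
    and h_c0: "h y - c0 = s *\<^sub>R (y - c0)" for y
    by (simp_all add: h_def algebra_simps)
  have surj_h: "y = h (c0 + inverse s *\<^sub>R (y - c0))" for y
    using \<open>0 < s\<close> by (simp add: h_def)
  have scaled_P: "(h y - (s *\<^sub>R (c - c0) + c0)) \<bullet> ((m *\<^sub>R P) *v (h y - (s *\<^sub>R (c - c0) + c0)))
      = (y - c) \<bullet> (P *v (y - c))"
    and scaled_P0: "(h y - c0) \<bullet> (P0 *v (h y - c0)) = s\<^sup>2 * ((y - c0) \<bullet> (P0 *v (y - c0)))"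
    for y
    unfolding h_d h_c0 quadratic_form_scaleR scaleR_matrix_vector_assoc[symmetric]
      inner_scaleR_right
    using s2 by (simp_all add: mult.assoc[symmetric] mult.commute[of m])
  show "inscribed (ellipsoid (m powr (-1/2) *\<^sub>R (c - c0) + c0) (m *\<^sub>R P)) (ellipsoid c0 P0)"
    unfolding s_def[symmetric]
  proof (intro inscribed_ellipsoidI[where x = "h x"] allI impI)
    fix y'
    assume y': "(y' - (s *\<^sub>R (c - c0) + c0)) \<bullet> ((m *\<^sub>R P) *v (y' - (s *\<^sub>R (c - c0) + c0)))
      \<le> 1"
    define y where "y = c0 + inverse s *\<^sub>R (y' - c0)"
    have y'_eq: "y' = h y" unfolding y_def by (rule surj_h)
    then have "(y - c) \<bullet> (P *v (y - c)) \<le> 1" using y' scaled_P by simp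
    then have "s\<^sup>2 * ((y - c0) \<bullet> (P0 *v (y - c0))) \<le> s\<^sup>2 * m"
      using bound by (simp add: mult_left_mono)
    then show "(y' - c0) \<bullet> (P0 *v (y' - c0)) \<le> 1" using y'_eq scaled_P0 s2 by simp
  qed (use x s2 scaled_P scaled_P0 in \<open>simp_all add: mult.commute\<close>)
qed

lemma ellipsoid_quadratic_max:
  fixes c c0 :: "real^'n" and P P0 L V :: "real^'n^'n" and lam :: "real^'n"
  assumes P: "sym_posdef P" and P0: "sym_posdef P0" and L: "P0 = L ** transpose L"
    and spec: "spectral_decomp (matrix_inv L ** P ** transpose (matrix_inv L)) V lam"
  defines "ct \<equiv> transpose L *v (c - c0)"
  defines "m \<equiv> - Sup (ell V lam ct ` I_set (matrix_inv L ** P ** transpose (matrix_inv L)) V lam ct)"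
  shows "0 < m"
    and "\<forall>x. (x - c) \<bullet> (P *v (x - c)) \<le> 1 \<longrightarrow> (x - c0) \<bullet> (P0 *v (x - c0)) \<le> m"
    and "\<exists>x. (x - c) \<bullet> (P *v (x - c)) = 1 \<and> (x - c0) \<bullet> (P0 *v (x - c0)) = m"
proof -
  have "invertible L"
    using sym_posdef_invertible[OF P0] L invertible_mult_left_factor by blast
  define A where "A = transpose (matrix_inv L) ** V"
  define B where "B = transpose V ** transpose L"
  note diag = simultaneous_diagonalization[OF \<open>invertible L\<close> spec, folded A_def B_def L]
  have lam: "\<forall>i. 0 < lam$i" using diag_congruence_pos[OF P diag(2) diag(4)] by blast
  define a where "a = B *v (c - c0)"
  have a_eq: "a = transpose V *v ct"
    by (simp add: a_def B_def ct_def matrix_vector_mul_assoc del: transpose_matrix_vector)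
  have qP: "(x - c) \<bullet> (P *v (x - c)) = (\<Sum>i\<in>UNIV. lam$i * ((B *v (x - c0))$i - a$i)\<^sup>2)" for x
  proof -
    have "B *v (x - c) = B *v (x - c0) - a"
      by (simp add: a_def flip: matrix_vector_mult_diff_distrib)
    then show ?thesis using quadratic_form_coordinates[OF diag(2) diag(3), of "x - c"] by simp
  qed
  have qP0: "(x - c0) \<bullet> (P0 *v (x - c0)) = (\<Sum>i\<in>UNIV. ((B *v (x - c0))$i)\<^sup>2)" for x
    using quadratic_form_coordinates[OF diag(1) diag(3)] by simp
  obtain \<beta> z where \<beta>: "\<beta> \<in> dual_domain lam a"
    and z: "(\<Sum>i\<in>UNIV. lam$i * (z$i - a$i)\<^sup>2) = 1" "(\<Sum>i\<in>UNIV. (z$i)\<^sup>2) = dual_objective lam a \<beta>"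
    using strong_duality[OF lam] .
  have "Sup ((\<lambda>\<beta>. - dual_objective lam a \<beta>) ` dual_domain lam a) = - dual_objective lam a \<beta>"
    using \<beta> weak_duality[OF lam _ eq_refl[OF z(1)]] z(2) by (intro cSup_eq_maximum) auto
  then have m: "m = dual_objective lam a \<beta>"
    by (simp add: m_def I_set_spectral_decomp[OF spec] ell_eq_neg_dual_objective a_eq image_image)
  show "0 < m" using dual_objective_pos[OF lam \<beta>] m by simp
  show "\<forall>x. (x - c) \<bullet> (P *v (x - c)) \<le> 1 \<longrightarrow> (x - c0) \<bullet> (P0 *v (x - c0)) \<le> m"
    using weak_duality[OF lam \<beta>] by (simp add: qP qP0 m)
  define x where "x = c0 + A *v z"
  have "B *v (x - c0) = z"
    using diag(4) by (simp add: x_def matrix_vector_mul_assoc del: transpose_matrix_vector)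
  then have "(x - c) \<bullet> (P *v (x - c)) = 1 \<and> (x - c0) \<bullet> (P0 *v (x - c0)) = m"
    using z m by (simp add: qP qP0)
  then show "\<exists>x. (x - c) \<bullet> (P *v (x - c)) = 1 \<and> (x - c0) \<bullet> (P0 *v (x - c0)) = m" ..
qed

theorem corollary2:
  fixes c c0 :: "real^('n::{finite,linorder})"
    and P P0 L0 V :: "real^('n::{finite,linorder})^('n::{finite,linorder})"
    and lam :: "real^('n::{finite,linorder})"
  assumes "sym_posdef P" and "sym_posdef P0"
    and "cholesky_factor L0 P0"
    and "spectral_decomp (matrix_inv L0 ** P ** transpose (matrix_inv L0)) V lam"
  shows "let ct = transpose L0 *v (c - c0);
             Pt = matrix_inv L0 ** P ** transpose (matrix_inv L0);
             lstar = Sup (ell V lam ct ` I_set Pt V lam ct);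
             d = (- lstar) powr (-1/2) *\<^sub>R (c - c0) + c0
         in inscribed (ellipsoid c P) (ellipsoid c0 (inverse (- lstar) *\<^sub>R P0))
          \<and> inscribed (ellipsoid d ((- lstar) *\<^sub>R P)) (ellipsoid c0 P0)"
proof -
  have "P0 = L0 ** transpose L0" using assms(3) by (simp add: cholesky_factor_def)
  note quad_max = ellipsoid_quadratic_max[OF assms(1,2) this assms(4), of c c0]
  show ?thesis
    unfolding Let_def by (intro conjI inscribed_ellipsoids_of_max[OF quad_max])
qed

end
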